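(* Let $\mathbf A\in\mathbb C^{m\times m}$ with $\operatorname{Ind}\mathbf A=k$ and $\operatorname{rank}\mathbf A^{k+1}=\operatorname{rank}\mathbf A^{k}=r\le m$, let $\mathbf B\in\mathbb C^{n\times m}$, and let $\check{\mathbf B}=\mathbf B\mathbf A^{k}$ with $i$-th row $\check{\mathbf b}_{i.}$. Then the Drazin inverse solution $\mathbf X=\mathbf B\mathbf A^{D}=(x_{ij})\in\mathbb C^{n\times m}$ of $\mathbf X\mathbf A=\mathbf B$ satisfies, for all $i=1,\dots,n$, $j=1,\dots,m$, \[x_{ij}=\frac{\sum_{\alpha\in I_{r,m}\{j\}}\left|\left(\mathbf A^{k+1}_{j.}(\check{\mathbf b}_{i.})\right)^{\alpha}_{\alpha}\right|}{\sum_{\alpha\in I_{r,m}}\left|(\mathbf A^{k+1})^{\alpha}_{\alpha}\right|}.\]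
   Context: $\operatorname{Ind}\mathbf A$ is the smallest nonnegative $k$ with $\operatorname{rank}\mathbf A^{k+1}=\operatorname{rank}\mathbf A^{k}$; the Drazin inverse $\mathbf A^{D}$ is the unique $\mathbf X$ with $\mathbf A^{k+1}\mathbf X=\mathbf A^{k}$, $\mathbf X\mathbf A\mathbf X=\mathbf X$, $\mathbf A\mathbf X=\mathbf X\mathbf A$. $\mathbf M_{j.}(\mathbf c)$ denotes $\mathbf M$ with its $j$-th row replaced by the row vector $\mathbf c$. $I_{r,m}$ is the set of strictly increasing sequences of $r$ elements of $\{1,\dots,m\}$, $I_{r,m}\{j\}=\{\alpha\in I_{r,m}:j\in\alpha\}$, $\mathbf M^{\alpha}_{\alpha}$ is the principal submatrix indexed by $\alpha$, $|\cdot|$ is the determinant. *)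

theory Defs
  imports "Jordan_Normal_Form.DL_Rank_Submatrix" "Jordan_Normal_Form.Determinant"
begin

(* rank of a complex matrix (column rank; rows = vector dimension) *)
definition crank :: "complex mat \<Rightarrow> nat" where
  "crank A = vec_space.rank (dim_row A) A"

definition mat_ind :: "complex mat \<Rightarrow> nat" where
  "mat_ind A = (LEAST k. crank (A ^\<^sub>m (k+1)) = crank (A ^\<^sub>m k))"

definition is_drazin_inverse :: "complex mat \<Rightarrow> complex mat \<Rightarrow> bool" where
  "is_drazin_inverse A X \<longleftrightarrow> X \<in> carrier_mat (dim_row A) (dim_row A) \<and>
     A ^\<^sub>m (mat_ind A + 1) * X = A ^\<^sub>m (mat_ind A) \<and> X * A * X = X \<and> A * X = X * A"

definition drazin :: "complex mat \<Rightarrow> complex mat" where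
  "drazin A = (THE X. is_drazin_inverse A X)"

(* M_{j.}(c): M with its j-th row replaced by the row vector c *)
definition replace_row :: "'a mat \<Rightarrow> nat \<Rightarrow> 'a vec \<Rightarrow> 'a mat" where
  "replace_row M j c = mat (dim_row M) (dim_col M) (\<lambda>(a,b). if a = j then c $ b else M $$ (a,b))"

definition principal_submatrix :: "'a mat \<Rightarrow> nat set \<Rightarrow> 'a mat" where
  "principal_submatrix M \<alpha> = submatrix M \<alpha> \<alpha>"

definition Irm :: "nat \<Rightarrow> nat \<Rightarrow> nat set set" where
  "Irm r m = {\<alpha>. \<alpha> \<subseteq> {..<m} \<and> card \<alpha> = r}"

end

theory Submission
  imports Defs
begin

(*
  With C = A^(k+1), both sums are coefficients of t^(m-r): the denominator in det (t I + C), the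
  numerator in det ((t I + C)_{j.}(b_i)) with b = B A^k, which by Cramer's rule is (b adj (t I + C))_ij.
  Since rank C = rank A^k = r we get A^k = C Y, hence C = C^2 Y^(k+1), and a full rank factorisation
  C = F H has H F invertible. Then Sylvester's identity det (t I + F H) = t^(m-r) det (t I + H F)
  makes the denominator det (H F) <> 0, and G = F (H F)^-2 H is a group inverse of C, from which
  A^D = G A^k = W C with A^k = W C^2. Writing b = X C C with X = B W, the identity
  C adj (t I + C) = det (t I + C) I - t adj (t I + C) turns the numerator polynomial into
  X C_ij det (t I + C) minus t times a polynomial whose t^(m-r-1) coefficient is a sum of principal
  minors of order r + 1 of a matrix with rows in the row space of H, hence zero. So the numerator is
  (X C)_ij det (H F) = (B A^D)_ij det (H F).
*)

section \<open>Principal minors as coefficients\<close>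

definition principal_pad :: "'a::{zero,one} mat \<Rightarrow> nat set \<Rightarrow> 'a mat" where
  "principal_pad Y S = mat (dim_row Y) (dim_col Y)
     (\<lambda>(i,j). if i \<in> S \<and> j \<in> S then Y $$ (i,j) else if i = j then 1 else 0)"

lemma principal_pad_carrier: "Y \<in> carrier_mat m m \<Longrightarrow> principal_pad Y S \<in> carrier_mat m m"
  unfolding principal_pad_def by auto

lemma principal_pad_index:
  "Y \<in> carrier_mat m m \<Longrightarrow> i < m \<Longrightarrow> j < m \<Longrightarrow>
   principal_pad Y S $$ (i,j) = (if i \<in> S \<and> j \<in> S then Y $$ (i,j) else if i = j then 1 else 0)"
  unfolding principal_pad_def by auto

lemma not_permutes_subset_moves:
  assumes "p permutes {0..<m}" "S \<subseteq> {0..<m}" "\<not> p permutes S"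
  obtains i where "i \<in> {0..<m} - S" "p i \<noteq> i"
  using assms permutes_superset by blast

lemma det_principal_pad:
  fixes Y :: "'a::comm_ring_1 mat"
  assumes Y: "Y \<in> carrier_mat m m" and S: "S \<subseteq> {0..<m}"
  shows "det (principal_pad Y S) = (\<Sum>p\<in>{p. p permutes S}. signof p * (\<Prod>i\<in>S. Y $$ (i, p i)))"
proof -
  note ent = principal_pad_index[OF Y]
  have "det (principal_pad Y S) =
      (\<Sum>p\<in>{p. p permutes {0..<m}}. signof p * (\<Prod>i=0..<m. principal_pad Y S $$ (i, p i)))"
    by (rule det_def'[OF principal_pad_carrier[OF Y]])
  also have "\<dots> = (\<Sum>p\<in>{p. p permutes S}. signof p * (\<Prod>i=0..<m. principal_pad Y S $$ (i, p i)))"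
  proof (rule sum.mono_neutral_right)
    show "finite {p. p permutes {0..<m}}" by (simp add: finite_permutations)
    show "{p. p permutes S} \<subseteq> {p. p permutes {0..<m}}" using S permutes_subset by blast
    show "\<forall>p\<in>{p. p permutes {0..<m}} - {p. p permutes S}.
        signof p * (\<Prod>i = 0..<m. principal_pad Y S $$ (i, p i)) = 0"
    proof
      fix p assume "p \<in> {p. p permutes {0..<m}} - {p. p permutes S}"
      then have p: "p permutes {0..<m}" and np: "\<not> p permutes S" by auto
      obtain i where i: "i \<in> {0..<m} - S" "p i \<noteq> i" using not_permutes_subset_moves[OF p S np] .
      have "p i < m" using p i permutes_in_image by fastforce
      then have "principal_pad Y S $$ (i, p i) = 0" using i ent by auto
      then have "(\<Prod>i = 0..<m. principal_pad Y S $$ (i, p i)) = 0" using i by (intro prod_zero) auto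
      then show "signof p * (\<Prod>i = 0..<m. principal_pad Y S $$ (i, p i)) = 0" by simp
    qed
  qed
  also have "\<dots> = (\<Sum>p\<in>{p. p permutes S}. signof p * (\<Prod>i\<in>S. Y $$ (i, p i)))"
  proof (rule sum.cong[OF refl])
    fix p assume "p \<in> {p. p permutes S}"
    then have p: "p permutes S" by auto
    have "(\<Prod>i=0..<m. principal_pad Y S $$ (i, p i)) = (\<Prod>i\<in>S. principal_pad Y S $$ (i, p i))"
      using S p ent permutes_not_in by (intro prod.mono_neutral_right) fastforce+
    also have "\<dots> = (\<Prod>i\<in>S. Y $$ (i, p i))"
      using S ent permutes_in_image[OF p] by (intro prod.cong) (auto simp: subset_iff)
    finally show "signof p * (\<Prod>i=0..<m. principal_pad Y S $$ (i, p i)) =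
        signof p * (\<Prod>i\<in>S. Y $$ (i, p i))" by simp
  qed
  finally show ?thesis .
qed

lemma sum_permutes_fix_outside:
  fixes Y :: "'a::comm_ring_1 mat"
  assumes Y: "Y \<in> carrier_mat m m" and S: "S \<subseteq> {0..<m}"
  shows "(\<Sum>p\<in>{p. p permutes {0..<m}}. signof p *
      ((\<Prod>i\<in>S. Y $$ (i, p i)) * (\<Prod>i\<in>{0..<m}-S. if i = p i then x i else 0)))
    = (\<Prod>i\<in>{0..<m}-S. x i) * det (principal_pad Y S)"
proof -
  let ?D = "\<lambda>p. \<Prod>i\<in>{0..<m}-S. if i = p i then x i else 0"
  have "(\<Sum>p\<in>{p. p permutes {0..<m}}. signof p * ((\<Prod>i\<in>S. Y $$ (i, p i)) * ?D p))
      = (\<Sum>p\<in>{p. p permutes S}. signof p * ((\<Prod>i\<in>S. Y $$ (i, p i)) * ?D p))"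
  proof (rule sum.mono_neutral_right)
    show "finite {p. p permutes {0..<m}}" by (simp add: finite_permutations)
    show "{p. p permutes S} \<subseteq> {p. p permutes {0..<m}}" using S permutes_subset by blast
    show "\<forall>p\<in>{p. p permutes {0..<m}} - {p. p permutes S}. signof p * ((\<Prod>i\<in>S. Y $$ (i, p i)) * ?D p) = 0"
    proof
      fix p assume "p \<in> {p. p permutes {0..<m}} - {p. p permutes S}"
      then obtain i where "i \<in> {0..<m} - S" "p i \<noteq> i"
        using not_permutes_subset_moves[OF _ S] by blast
      then have "?D p = 0" by (intro prod_zero) (auto intro!: bexI[of _ i])
      then show "signof p * ((\<Prod>i\<in>S. Y $$ (i, p i)) * ?D p) = 0" by simp
    qed
  qed
  also have "\<dots> = (\<Sum>p\<in>{p. p permutes S}. (\<Prod>i\<in>{0..<m}-S. x i) * (signof p * (\<Prod>i\<in>S. Y $$ (i, p i))))"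
  proof (rule sum.cong[OF refl])
    fix p assume "p \<in> {p. p permutes S}"
    then have "?D p = (\<Prod>i\<in>{0..<m}-S. x i)"
      using permutes_not_in by (intro prod.cong) fastforce+
    then show "signof p * ((\<Prod>i\<in>S. Y $$ (i, p i)) * ?D p) =
        (\<Prod>i\<in>{0..<m}-S. x i) * (signof p * (\<Prod>i\<in>S. Y $$ (i, p i)))" by (simp add: ac_simps)
  qed
  also have "\<dots> = (\<Prod>i\<in>{0..<m}-S. x i) * det (principal_pad Y S)"
    unfolding det_principal_pad[OF Y S] by (simp add: sum_distrib_left)
  finally show ?thesis .
qed

lemma det_diag_add:
  fixes Y :: "'a::comm_ring_1 mat"
  assumes Y: "Y \<in> carrier_mat m m"
  shows "det (mat m m (\<lambda>(i,j). (if i = j then x i else 0) + Y $$ (i,j))) =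
    (\<Sum>S\<in>Pow {0..<m}. (\<Prod>i\<in>{0..<m}-S. x i) * det (principal_pad Y S))"
    (is "det ?M = _")
proof -
  let ?P = "{p. p permutes {0..<m}}"
  let ?D = "\<lambda>p S. \<Prod>i\<in>{0..<m}-S. if i = p i then x i else 0"
  have "det ?M = (\<Sum>p\<in>?P. signof p * (\<Prod>i=0..<m. Y $$ (i, p i) + (if i = p i then x i else 0)))"
    unfolding det_def'[OF mat_carrier]
    by (intro sum.cong refl arg_cong2[where f="(*)"] prod.cong, insert permutes_in_image, fastforce+)
  also have "\<dots> = (\<Sum>p\<in>?P. signof p * (\<Sum>S\<in>Pow {0..<m}. (\<Prod>i\<in>S. Y $$ (i, p i)) * ?D p S))"
    by (subst prod_add) auto
  also have "\<dots> = (\<Sum>p\<in>?P. \<Sum>S\<in>Pow {0..<m}. signof p * ((\<Prod>i\<in>S. Y $$ (i, p i)) * ?D p S))"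
    by (simp add: sum_distrib_left)
  also have "\<dots> = (\<Sum>S\<in>Pow {0..<m}. \<Sum>p\<in>?P. signof p * ((\<Prod>i\<in>S. Y $$ (i, p i)) * ?D p S))"
    by (rule sum.swap)
  also have "\<dots> = (\<Sum>S\<in>Pow {0..<m}. (\<Prod>i\<in>{0..<m}-S. x i) * det (principal_pad Y S))"
    using sum_permutes_fix_outside[OF Y] by (intro sum.cong) auto
  finally show ?thesis .
qed

lemma bij_betw_pick:
  assumes "finite S"
  shows "bij_betw (pick S) {0..<card S} S"
proof -
  have inj: "inj_on (pick S) {0..<card S}"
    by (rule inj_onI) (metis atLeastLessThan_iff card_pick)
  have sub: "pick S ` {0..<card S} \<subseteq> S" using pick_in_set_le by auto
  have "card (pick S ` {0..<card S}) = card S" using card_image[OF inj] by simp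
  then have "pick S ` {0..<card S} = S" using card_subset_eq[OF assms sub] by simp
  then show ?thesis using inj unfolding bij_betw_def by auto
qed

lemma det_principal_submatrix:
  fixes Y :: "'a::comm_ring_1 mat"
  assumes Y: "Y \<in> carrier_mat m m" and S: "S \<subseteq> {0..<m}"
  shows "det (principal_submatrix Y S) = det (principal_pad Y S)"
proof -
  define s where "s = card S"
  define f where "f = pick S"
  have cs: "card {i. i < m \<and> i \<in> S} = s" unfolding s_def using S by (intro arg_cong[where f=card]) auto
  have SM: "principal_submatrix Y S \<in> carrier_mat s s"
    using Y cs unfolding principal_submatrix_def submatrix_def by auto
  have ent: "a < s \<Longrightarrow> b < s \<Longrightarrow> principal_submatrix Y S $$ (a,b) = Y $$ (f a, f b)" for a b
    using Y cs unfolding principal_submatrix_def submatrix_def f_def by auto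
  have bf: "bij_betw f {0..<s} S"
    unfolding f_def s_def using S by (intro bij_betw_pick) (auto intro: finite_subset)
  then have inj: "inj_on f {0..<s}" by (rule bij_betw_imp_inj_on)
  \<comment> \<open>transport permutations of \<open>{0..<s}\<close> to permutations of \<open>S\<close> along the order isomorphism \<open>f\<close>\<close>
  let ?\<Phi> = "map_permutation {0..<s} f"
  have bP: "bij_betw ?\<Phi> {\<pi>. \<pi> permutes {0..<s}} {\<pi>. \<pi> permutes S}"
    using bij_betw_permutations[OF bf] bij_betw_imp_surj_on[OF bf]
    unfolding map_permutation_def restrict_id_def o_def by simp
  have "det (principal_pad Y S) = (\<Sum>p\<in>{p. p permutes S}. signof p * (\<Prod>i\<in>S. Y $$ (i, p i)))"
    by (rule det_principal_pad[OF Y S])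
  also have "\<dots> = (\<Sum>q\<in>{q. q permutes {0..<s}}. signof (?\<Phi> q) * (\<Prod>i\<in>S. Y $$ (i, ?\<Phi> q i)))"
    by (rule sum.reindex_bij_betw[OF bP, symmetric])
  also have "\<dots> = (\<Sum>q\<in>{q. q permutes {0..<s}}. signof q * (\<Prod>a=0..<s. principal_submatrix Y S $$ (a, q a)))"
  proof (rule sum.cong[OF refl])
    fix q assume "q \<in> {q. q permutes {0..<s}}"
    then have q: "q permutes {0..<s}" by auto
    have "(\<Prod>i\<in>S. Y $$ (i, ?\<Phi> q i)) = (\<Prod>a\<in>{0..<s}. Y $$ (f a, ?\<Phi> q (f a)))"
      by (rule prod.reindex_bij_betw[OF bf, symmetric])
    also have "\<dots> = (\<Prod>a=0..<s. principal_submatrix Y S $$ (a, q a))"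
      using ent permutes_in_image[OF q] map_permutation_apply[OF inj] by (intro prod.cong) auto
    finally show "signof (?\<Phi> q) * (\<Prod>i\<in>S. Y $$ (i, ?\<Phi> q i)) =
        signof q * (\<Prod>a=0..<s. principal_submatrix Y S $$ (a, q a))"
      using sign_map_permutation[OF inj q] by simp
  qed
  also have "\<dots> = det (principal_submatrix Y S)" by (rule det_def'[OF SM, symmetric])
  finally show ?thesis by (rule sym)
qed

definition principal_minor_poly :: "nat set set \<Rightarrow> 'a::comm_ring_1 mat \<Rightarrow> 'a poly" where
  "principal_minor_poly \<S> Y = (\<Sum>S\<in>\<S>. monom (det (principal_pad Y S)) (dim_row Y - card S))"

lemma card_Diff_atLeastLessThan: "S \<in> Pow {0..<m} \<Longrightarrow> card ({0..<m} - S) = m - card S"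
  by (subst card_Diff_subset) (auto intro: finite_subset)

lemma poly_principal_minor_poly:
  fixes C :: "'a::comm_ring_1 mat"
  assumes C: "C \<in> carrier_mat m m"
  shows "poly (principal_minor_poly (Pow {0..<m}) C) t = det (t \<cdot>\<^sub>m 1\<^sub>m m + C)"
proof -
  have "t \<cdot>\<^sub>m 1\<^sub>m m + C = mat m m (\<lambda>(i,j). (if i = j then t else 0) + C $$ (i,j))"
    using C by (auto intro!: eq_matI)
  then have "det (t \<cdot>\<^sub>m 1\<^sub>m m + C) = (\<Sum>S\<in>Pow {0..<m}. (\<Prod>i\<in>{0..<m}-S. t) * det (principal_pad C S))"
    using det_diag_add[OF C, of "\<lambda>_. t"] by simp
  also have "\<dots> = poly (principal_minor_poly (Pow {0..<m}) C) t"
    using C card_Diff_atLeastLessThan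
    by (auto simp: principal_minor_poly_def poly_sum poly_monom mult.commute intro!: sum.cong)
  finally show ?thesis by simp
qed

lemma coeff_principal_minor_poly:
  fixes Y :: "'a::comm_ring_1 mat"
  assumes Y: "Y \<in> carrier_mat m m" and \<S>: "\<S> \<subseteq> Pow {0..<m}" and r: "r \<le> m"
  shows "coeff (principal_minor_poly \<S> Y) (m - r) = (\<Sum>S\<in>{S\<in>\<S>. card S = r}. det (principal_pad Y S))"
proof -
  have "coeff (principal_minor_poly \<S> Y) (m - r) =
      (\<Sum>S\<in>\<S>. if card S = r then det (principal_pad Y S) else 0)"
    unfolding principal_minor_poly_def coeff_sum coeff_monom carrier_matD(1)[OF Y]
  proof (rule sum.cong[OF refl])
    fix S assume "S \<in> \<S>"
    then have "card S \<le> m" using \<S> card_mono[of "{0..<m}" S] by auto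
    then show "(if m - card S = m - r then det (principal_pad Y S) else 0) =
        (if card S = r then det (principal_pad Y S) else 0)"
      using r by auto
  qed
  also have "\<dots> = (\<Sum>S\<in>{S\<in>\<S>. card S = r}. det (principal_pad Y S))"
    using \<S> by (subst sum.inter_filter[symmetric]) (auto intro: finite_subset)
  finally show ?thesis .
qed

lemma sum_principal_minors_eq_coeff:
  fixes Y :: "'a::comm_ring_1 mat"
  assumes Y: "Y \<in> carrier_mat m m" and r: "r \<le> m"
  shows "(\<Sum>\<alpha>\<in>{\<alpha>\<in>Irm r m. P \<alpha>}. det (principal_submatrix Y \<alpha>)) =
    coeff (principal_minor_poly {S\<in>Pow {0..<m}. P S} Y) (m - r)"
proof -
  have sub: "{S\<in>Pow {0..<m}. P S} \<subseteq> Pow {0..<m}" by auto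
  have "{\<alpha>\<in>Irm r m. P \<alpha>} = {S\<in>{S\<in>Pow {0..<m}. P S}. card S = r}" unfolding Irm_def by auto
  then show ?thesis unfolding coeff_principal_minor_poly[OF Y sub r]
    by (auto intro!: sum.cong det_principal_submatrix[OF Y])
qed

section \<open>Replacing a row and the adjugate\<close>

lemma replace_row_carrier [simp]: "T \<in> carrier_mat m n \<Longrightarrow> replace_row T j y \<in> carrier_mat m n"
  unfolding replace_row_def by auto

lemma replace_row_dims [simp]:
  "dim_row (replace_row T j y) = dim_row T" "dim_col (replace_row T j y) = dim_col T"
  unfolding replace_row_def by auto

lemma replace_row_index [simp]:
  "a < dim_row T \<Longrightarrow> b < dim_col T \<Longrightarrow> replace_row T j y $$ (a,b) = (if a = j then y $ b else T $$ (a,b))"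
  unfolding replace_row_def by auto

lemma row_replace_row:
  assumes "a < dim_row T" "dim_vec y = dim_col T"
  shows "row (replace_row T j y) a = (if a = j then y else row T a)"
  using assms by (intro eq_vecI) (auto simp: replace_row_def split: if_splits)

lemma replace_row_mult:
  assumes G: "G \<in> carrier_mat m r" and H: "H \<in> carrier_mat r p" and Z: "Z \<in> carrier_mat n r"
    and i: "i < n"
  shows "replace_row (G * H) j (row (Z * H) i) = replace_row G j (row Z i) * H"
proof (rule eq_matI)
  fix a b assume "a < dim_row (replace_row G j (row Z i) * H)" "b < dim_col (replace_row G j (row Z i) * H)"
  then have a: "a < m" and b: "b < p" using G H by auto
  show "replace_row (G * H) j (row (Z * H) i) $$ (a,b) = (replace_row G j (row Z i) * H) $$ (a,b)"
    using G H Z i a b by (simp add: row_replace_row)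
qed (use G H in auto)

lemma det_replace_row:
  fixes T :: "'a::comm_ring_1 mat"
  assumes T: "T \<in> carrier_mat m m" and j: "j < m"
  shows "det (replace_row T j y) = (\<Sum>l<m. y $ l * adj_mat T $$ (l,j))"
proof -
  have R: "replace_row T j y \<in> carrier_mat m m" using T by simp
  have "det (replace_row T j y) = (\<Sum>l<m. replace_row T j y $$ (j,l) * cofactor (replace_row T j y) j l)"
    by (rule laplace_expansion_row[OF R j])
  also have "\<dots> = (\<Sum>l<m. y $ l * adj_mat T $$ (l,j))"
  proof (rule sum.cong[OF refl])
    fix l assume l: "l \<in> {..<m}"
    have "mat_delete (replace_row T j y) j l = mat_delete T j l"
      unfolding mat_delete_def using T j l by (intro eq_matI) auto
    moreover have "adj_mat T $$ (l,j) = cofactor T j l" unfolding adj_mat_def using T j l by auto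
    ultimately show "replace_row T j y $$ (j,l) * cofactor (replace_row T j y) j l = y $ l * adj_mat T $$ (l,j)"
      using T j l by (simp add: cofactor_def)
  qed
  finally show ?thesis .
qed

lemma mult_adj_mat_index:
  fixes T :: "'a::comm_ring_1 mat"
  assumes T: "T \<in> carrier_mat m m" and X: "X \<in> carrier_mat n m" and i: "i < n" and j: "j < m"
  shows "(X * adj_mat T) $$ (i,j) = det (replace_row T j (row X i))"
proof -
  have aT: "adj_mat T \<in> carrier_mat m m" using adj_mat(1)[OF T] .
  have "(X * adj_mat T) $$ (i,j) = (\<Sum>l<m. row X i $ l * adj_mat T $$ (l,j))"
    using X aT i j by (auto simp: scalar_prod_def lessThan_atLeast0 intro!: sum.cong)
  also have "\<dots> = det (replace_row T j (row X i))" using det_replace_row[OF T j] by simp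
  finally show ?thesis .
qed

lemma mult_mult_adj_mat_shift:
  fixes C X :: "'a::comm_ring_1 mat" and t :: 'a and m :: nat
  defines "T \<equiv> t \<cdot>\<^sub>m 1\<^sub>m m + C"
  assumes C: "C \<in> carrier_mat m m" and X: "X \<in> carrier_mat n m" and i: "i < n" and j: "j < m"
  shows "(X * C * adj_mat T) $$ (i,j) = X $$ (i,j) * det T - t * (X * adj_mat T) $$ (i,j)"
proof -
  have T: "T \<in> carrier_mat m m" unfolding T_def using C by auto
  define Q where "Q = adj_mat T"
  have Q: "Q \<in> carrier_mat m m" unfolding Q_def using adj_mat(1)[OF T] .
  have CQ: "(C * Q) $$ (l,j) = (if l = j then det T else 0) - t * Q $$ (l,j)" if l: "l < m" for l
  proof -
    have "(T * Q) $$ (l,j) = (t \<cdot>\<^sub>m 1\<^sub>m m * Q + C * Q) $$ (l,j)"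
      unfolding T_def using C Q by (subst add_mult_distrib_mat) auto
    also have "\<dots> = t * Q $$ (l,j) + (C * Q) $$ (l,j)" using C Q l j by simp
    finally have "(C * Q) $$ (l,j) = (T * Q) $$ (l,j) - t * Q $$ (l,j)" by simp
    then show ?thesis using adj_mat(2)[OF T] l j unfolding Q_def by simp
  qed
  have "(X * C * Q) $$ (i,j) = (\<Sum>l\<in>{0..<m}. X $$ (i,l) * (C * Q) $$ (l,j))"
    using X C Q i j by (simp add: assoc_mult_mat[OF X C Q] scalar_prod_def)
  also have "\<dots> = (\<Sum>l\<in>{0..<m}. X $$ (i,l) * (if l = j then det T else 0))
      - t * (\<Sum>l\<in>{0..<m}. X $$ (i,l) * Q $$ (l,j))"
    by (simp add: CQ algebra_simps sum_subtractf sum_distrib_left)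
  also have "\<dots> = X $$ (i,j) * det T - t * (X * Q) $$ (i,j)"
    using X Q i j by (simp add: scalar_prod_def if_distrib[of "\<lambda>x. _ * x"] cong: if_cong)
  finally show ?thesis unfolding Q_def .
qed

lemma poly_principal_minor_poly_replace_row:
  fixes C :: "'a::comm_ring_1 mat"
  assumes C: "C \<in> carrier_mat m m" and j: "j < m"
  shows "poly (principal_minor_poly {S\<in>Pow {0..<m}. j \<in> S} (replace_row C j y)) t
    = det (replace_row (t \<cdot>\<^sub>m 1\<^sub>m m + C) j y)"
proof -
  let ?Y = "replace_row C j y"
  have Y: "?Y \<in> carrier_mat m m" using C by simp
  define x where "x = (\<lambda>a. if a = j then 0 else t)"
  have "replace_row (t \<cdot>\<^sub>m 1\<^sub>m m + C) j y = mat m m (\<lambda>(a,b). (if a = b then x a else 0) + ?Y $$ (a,b))"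
    using C j by (auto intro!: eq_matI simp: x_def)
  then have "det (replace_row (t \<cdot>\<^sub>m 1\<^sub>m m + C) j y) =
      (\<Sum>S\<in>Pow {0..<m}. (\<Prod>i\<in>{0..<m}-S. x i) * det (principal_pad ?Y S))"
    using det_diag_add[OF Y] by simp
  also have "\<dots> = (\<Sum>S\<in>Pow {0..<m}. if j \<in> S then det (principal_pad ?Y S) * t ^ (m - card S) else 0)"
  proof (rule sum.cong[OF refl])
    fix S assume S: "S \<in> Pow {0..<m}"
    show "(\<Prod>i\<in>{0..<m}-S. x i) * det (principal_pad ?Y S) =
        (if j \<in> S then det (principal_pad ?Y S) * t ^ (m - card S) else 0)"
    proof (cases "j \<in> S")
      case True
      then have "(\<Prod>i\<in>{0..<m}-S. x i) = (\<Prod>i\<in>{0..<m}-S. t)" unfolding x_def by (intro prod.cong) auto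
      then show ?thesis using True card_Diff_atLeastLessThan[OF S] by simp
    next
      case False
      then have "(\<Prod>i\<in>{0..<m}-S. x i) = 0" using j unfolding x_def by (intro prod_zero) auto
      then show ?thesis using False by simp
    qed
  qed
  also have "\<dots> = (\<Sum>S\<in>{S\<in>Pow {0..<m}. j \<in> S}. det (principal_pad ?Y S) * t ^ (m - card S))"
    by (subst sum.inter_filter[symmetric]) auto
  also have "\<dots> = poly (principal_minor_poly {S\<in>Pow {0..<m}. j \<in> S} ?Y) t"
    using C by (simp add: principal_minor_poly_def poly_sum poly_monom)
  finally show ?thesis by simp
qed

lemma principal_minor_poly_replace_row_mult:
  fixes C X :: "'a::{idom,ring_char_0} mat"
  assumes C: "C \<in> carrier_mat m m" and X: "X \<in> carrier_mat n m" and i: "i < n" and j: "j < m"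
  shows "principal_minor_poly {S\<in>Pow {0..<m}. j \<in> S} (replace_row C j (row (X * C) i)) =
     Polynomial.smult (X $$ (i,j)) (principal_minor_poly (Pow {0..<m}) C)
       - pCons 0 (principal_minor_poly {S\<in>Pow {0..<m}. j \<in> S} (replace_row C j (row X i)))"
    (is "?p = ?q")
proof (rule poly_eq_poly_eq_iff[THEN iffD1, OF ext])
  fix t
  have T: "t \<cdot>\<^sub>m 1\<^sub>m m + C \<in> carrier_mat m m" using C by auto
  have XC: "X * C \<in> carrier_mat n m" using X C by simp
  show "poly ?p t = poly ?q t"
    unfolding poly_principal_minor_poly_replace_row[OF C j] poly_diff poly_smult poly_pCons
      poly_principal_minor_poly[OF C] mult_adj_mat_index[OF T XC i j, symmetric]
      mult_adj_mat_index[OF T X i j, symmetric]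
    using mult_mult_adj_mat_shift[OF C X i j] by simp
qed

section \<open>Principal minors of low rank matrices\<close>

lemma exists_kernel_vec_wide:
  fixes H :: "'a::idom mat"
  assumes H: "H \<in> carrier_mat r s" and rs: "r < s"
  obtains w where "w \<in> carrier_vec s" "w \<noteq> 0\<^sub>v s" "H *\<^sub>v w = 0\<^sub>v r"
proof -
  \<comment> \<open>pad \<open>H\<close> with zero rows to a square matrix, singular because its row \<open>r\<close> vanishes\<close>
  define Hs where "Hs = mat s s (\<lambda>(a,b). if a < r then H $$ (a,b) else 0)"
  have Hs: "Hs \<in> carrier_mat s s" unfolding Hs_def by auto
  have "det Hs = (\<Sum>j<s. Hs $$ (r,j) * cofactor Hs r j)" by (rule laplace_expansion_row[OF Hs rs])
  also have "\<dots> = 0" unfolding Hs_def using rs by (intro sum.neutral) auto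
  finally obtain w where w: "w \<in> carrier_vec s" "w \<noteq> 0\<^sub>v s" "Hs *\<^sub>v w = 0\<^sub>v s"
    using det_0_iff_vec_prod_zero[OF Hs] by metis
  have "H *\<^sub>v w = 0\<^sub>v r"
  proof (rule eq_vecI)
    fix a assume "a < dim_vec (0\<^sub>v r)"
    then have a: "a < r" by simp
    have "(H *\<^sub>v w) $ a = (Hs *\<^sub>v w) $ a" using H Hs w(1) a rs by (simp add: Hs_def scalar_prod_def)
    then show "(H *\<^sub>v w) $ a = 0\<^sub>v r $ a" using w(3) a rs by simp
  qed (use H in simp)
  with w(1,2) show ?thesis by (rule that)
qed

lemma exists_kernel_vec_supported:
  fixes H :: "'a::idom mat"
  assumes H: "H \<in> carrier_mat r m" and S: "S \<subseteq> {0..<m}" and cS: "card S > r"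
  shows "\<exists>v\<in>carrier_vec m. v \<noteq> 0\<^sub>v m \<and> H *\<^sub>v v = 0\<^sub>v r \<and> (\<forall>l<m. l \<notin> S \<longrightarrow> v $ l = 0)"
proof -
  define s where "s = card S"
  have bp: "bij_betw (pick S) {0..<s} S"
    unfolding s_def using S by (intro bij_betw_pick) (auto intro: finite_subset)
  have pick_S: "pick S b \<in> S" "pick S b < m" "card {x\<in>S. x < pick S b} = b" if "b < s" for b
    using pick_in_set_le[of b S] card_pick_le[of b S] that s_def S by auto
  define HS where "HS = mat r s (\<lambda>(a,b). H $$ (a, pick S b))"
  obtain w where w: "w \<in> carrier_vec s" "w \<noteq> 0\<^sub>v s" "HS *\<^sub>v w = 0\<^sub>v r"
    using exists_kernel_vec_wide[of HS r s] cS unfolding HS_def s_def by auto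
  define v where "v = vec m (\<lambda>l. if l \<in> S then w $ card {x\<in>S. x < l} else 0)"
  have v: "v \<in> carrier_vec m" unfolding v_def by auto
  have supp: "\<forall>l<m. l \<notin> S \<longrightarrow> v $ l = 0" unfolding v_def by auto
  have v_pick: "v $ pick S b = w $ b" if "b < s" for b
    unfolding v_def using pick_S[OF that] by simp
  have "v \<noteq> 0\<^sub>v m"
  proof
    assume v0: "v = 0\<^sub>v m"
    obtain b where b: "b < s" "w $ b \<noteq> 0" using w(1,2) by (metis eq_vecI carrier_vecD index_zero_vec)
    then show False using v0 v_pick[OF b(1)] pick_S[OF b(1)] by simp
  qed
  moreover have "H *\<^sub>v v = 0\<^sub>v r"
  proof (rule eq_vecI)
    fix a assume "a < dim_vec (0\<^sub>v r)"
    then have a: "a < r" by simp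
    have "(H *\<^sub>v v) $ a = (\<Sum>l\<in>{0..<m}. H $$ (a,l) * v $ l)"
      using H v a by (simp add: scalar_prod_def)
    also have "\<dots> = (\<Sum>l\<in>S. H $$ (a,l) * v $ l)"
      using S supp by (intro sum.mono_neutral_right) auto
    also have "\<dots> = (\<Sum>b\<in>{0..<s}. HS $$ (a,b) * w $ b)"
      using a v_pick unfolding HS_def by (subst sum.reindex_bij_betw[OF bp, symmetric]) simp
    also have "\<dots> = (HS *\<^sub>v w) $ a" using w(1) a by (simp add: HS_def scalar_prod_def)
    finally show "(H *\<^sub>v v) $ a = 0\<^sub>v r $ a" using a w(3) by simp
  qed (use H in simp)
  ultimately show ?thesis using v supp by blast
qed

lemma det_principal_pad_eq_0_of_kernel:
  fixes Y :: "'a::idom mat"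
  assumes Y: "Y \<in> carrier_mat m m" and v: "v \<in> carrier_vec m" "v \<noteq> 0\<^sub>v m" "Y *\<^sub>v v = 0\<^sub>v m"
    and supp: "\<forall>l<m. l \<notin> S \<longrightarrow> v $ l = 0"
  shows "det (principal_pad Y S) = 0"
proof -
  have M: "principal_pad Y S \<in> carrier_mat m m" by (rule principal_pad_carrier[OF Y])
  have "principal_pad Y S *\<^sub>v v = 0\<^sub>v m"
  proof (rule eq_vecI)
    fix a assume "a < dim_vec (0\<^sub>v m)"
    then have a: "a < m" by simp
    have "(principal_pad Y S *\<^sub>v v) $ a = (\<Sum>l\<in>{0..<m}. principal_pad Y S $$ (a,l) * v $ l)"
      using M v a by (simp add: scalar_prod_def)
    also have "\<dots> = (\<Sum>l\<in>{0..<m}. if a \<in> S then Y $$ (a,l) * v $ l else if a = l then v $ l else 0)"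
      using a supp by (intro sum.cong) (auto simp: principal_pad_index[OF Y])
    also have "\<dots> = (if a \<in> S then (Y *\<^sub>v v) $ a else v $ a)"
      using a Y v(1) by (simp add: scalar_prod_def)
    finally show "(principal_pad Y S *\<^sub>v v) $ a = 0\<^sub>v m $ a" using a supp v(3) by simp
  qed (use M in simp)
  then show ?thesis using det_0_iff_vec_prod_zero[OF M] v by blast
qed

lemma det_principal_pad_mult_eq_0:
  fixes G H :: "'a::idom mat"
  assumes G: "G \<in> carrier_mat m r" and H: "H \<in> carrier_mat r m"
    and S: "S \<subseteq> {0..<m}" and cS: "card S > r"
  shows "det (principal_pad (G * H) S) = 0"
proof -
  obtain v where v: "v \<in> carrier_vec m" "v \<noteq> 0\<^sub>v m" "H *\<^sub>v v = 0\<^sub>v r"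
    and supp: "\<forall>l<m. l \<notin> S \<longrightarrow> v $ l = 0"
    using exists_kernel_vec_supported[OF H S cS] by blast
  have "(G * H) *\<^sub>v v = G *\<^sub>v (H *\<^sub>v v)" using G H v(1) by (rule assoc_mult_mat_vec)
  also have "\<dots> = 0\<^sub>v m" unfolding v(3) using G by (intro eq_vecI) (auto simp: scalar_prod_def)
  finally show ?thesis using G H by (intro det_principal_pad_eq_0_of_kernel[OF _ v(1,2) _ supp]) auto
qed

lemma det_four_block_schur_upper:
  fixes F :: "'a::idom mat"
  assumes F: "F \<in> carrier_mat m r" and H: "H \<in> carrier_mat r m"
  shows "det (four_block_mat (t \<cdot>\<^sub>m 1\<^sub>m m) (- F) H (1\<^sub>m r)) = det (t \<cdot>\<^sub>m 1\<^sub>m m + F * H)"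
proof -
  define L where "L = four_block_mat (1\<^sub>m m) (- F) (0\<^sub>m r m) (1\<^sub>m r)"
  define M where "M = four_block_mat (t \<cdot>\<^sub>m 1\<^sub>m m + F * H) (0\<^sub>m m r) H (1\<^sub>m r)"
  have mF: "- F \<in> carrier_mat m r" and TFH: "t \<cdot>\<^sub>m 1\<^sub>m m + F * H \<in> carrier_mat m m" using F H by auto
  have "1\<^sub>m m * (t \<cdot>\<^sub>m 1\<^sub>m m + F * H) + - F * H = t \<cdot>\<^sub>m 1\<^sub>m m"
    using F H by (intro eq_matI) auto
  then have LM: "L * M = four_block_mat (t \<cdot>\<^sub>m 1\<^sub>m m) (- F) H (1\<^sub>m r)" unfolding L_def M_def
    by (subst mult_four_block_mat[OF one_carrier_mat mF zero_carrier_mat one_carrier_mat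
        TFH zero_carrier_mat H one_carrier_mat]) (use F H in auto)
  have "det L = 1" unfolding L_def
    by (subst det_four_block_mat_lower_left_zero[of _ m _ r]) (use F in auto)
  moreover have "det M = det (t \<cdot>\<^sub>m 1\<^sub>m m + F * H)" unfolding M_def
    by (subst det_four_block_mat_upper_right_zero[of _ m _ r]) (use F H in auto)
  moreover have "L \<in> carrier_mat (m+r) (m+r)" "M \<in> carrier_mat (m+r) (m+r)"
    unfolding L_def M_def using F H by (intro four_block_carrier_mat; simp)+
  ultimately show ?thesis using det_mult[of L "m+r" M] unfolding LM by simp
qed

lemma det_four_block_schur_lower:
  fixes F :: "'a::field mat"
  assumes F: "F \<in> carrier_mat m r" and H: "H \<in> carrier_mat r m" and t: "t \<noteq> 0"
  shows "det (four_block_mat (t \<cdot>\<^sub>m 1\<^sub>m m) (- F) H (1\<^sub>m r)) = t ^ m * (1/t) ^ r * det (t \<cdot>\<^sub>m 1\<^sub>m r + H * F)"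
proof -
  define M where "M = four_block_mat (t \<cdot>\<^sub>m 1\<^sub>m m) (0\<^sub>m m r) H (1\<^sub>m r + (1/t) \<cdot>\<^sub>m (H * F))"
  define U where "U = four_block_mat (1\<^sub>m m) (- ((1/t) \<cdot>\<^sub>m F)) (0\<^sub>m r m) (1\<^sub>m r)"
  have mtF: "- ((1/t) \<cdot>\<^sub>m F) \<in> carrier_mat m r" using F by auto
  have X: "1\<^sub>m r + (1/t) \<cdot>\<^sub>m (H * F) \<in> carrier_mat r r" using F H by simp
  have "t \<cdot>\<^sub>m 1\<^sub>m m * - ((1/t) \<cdot>\<^sub>m F) + 0\<^sub>m m r * 1\<^sub>m r = - F"
    using F t by (intro eq_matI) (auto simp: scalar_prod_def sum.delta if_distrib[of "\<lambda>x. x * _"] cong: if_cong)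
  moreover have "H * - ((1/t) \<cdot>\<^sub>m F) + (1\<^sub>m r + (1/t) \<cdot>\<^sub>m (H * F)) * 1\<^sub>m r = 1\<^sub>m r"
    using F H t by (intro eq_matI) (auto simp: scalar_prod_def sum_distrib_left algebra_simps)
  ultimately have MU: "M * U = four_block_mat (t \<cdot>\<^sub>m 1\<^sub>m m) (- F) H (1\<^sub>m r)" unfolding M_def U_def
    by (subst mult_four_block_mat[OF smult_carrier_mat[OF one_carrier_mat] zero_carrier_mat H X
        one_carrier_mat mtF zero_carrier_mat one_carrier_mat]) (use F H in auto)
  have "det U = 1" unfolding U_def
    by (subst det_four_block_mat_lower_left_zero[of _ m _ r]) (use F in auto)
  moreover have "1\<^sub>m r + (1/t) \<cdot>\<^sub>m (H * F) = (1/t) \<cdot>\<^sub>m (t \<cdot>\<^sub>m 1\<^sub>m r + H * F)"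
    using F H t by (intro eq_matI) (auto simp: algebra_simps)
  then have "det M = t ^ m * ((1/t) ^ r * det (t \<cdot>\<^sub>m 1\<^sub>m r + H * F))" unfolding M_def
    by (subst det_four_block_mat_upper_right_zero[of _ m _ r]) (use F H in auto)
  moreover have "M \<in> carrier_mat (m+r) (m+r)" "U \<in> carrier_mat (m+r) (m+r)"
    unfolding M_def U_def using F H by (intro four_block_carrier_mat; simp)+
  ultimately show ?thesis using det_mult[of M "m+r" U] unfolding MU by simp
qed

lemma sylvester_det_identity:
  fixes F :: "'a::field mat"
  assumes F: "F \<in> carrier_mat m r" and H: "H \<in> carrier_mat r m" and t: "t \<noteq> 0" and rm: "r \<le> m"
  shows "det (t \<cdot>\<^sub>m 1\<^sub>m m + F * H) = t ^ (m - r) * det (t \<cdot>\<^sub>m 1\<^sub>m r + H * F)"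
proof -
  have "t ^ m * (1/t) ^ r = t ^ (m - r)"
    using t rm by (simp add: power_diff power_one_over field_simps)
  then show ?thesis
    using det_four_block_schur_upper[OF F H] det_four_block_schur_lower[OF F H t] by simp
qed

lemma poly_eqI_nonzero:
  fixes p q :: "'a::{idom,ring_char_0} poly"
  assumes "\<And>t. t \<noteq> 0 \<Longrightarrow> poly p t = poly q t"
  shows "p = q"
proof (rule ccontr)
  assume "p \<noteq> q"
  then have "finite {t. poly (p - q) t = 0}" using poly_roots_finite[of "p - q"] by simp
  moreover have "UNIV - {0} \<subseteq> {t. poly (p - q) t = 0}" using assms by auto
  ultimately have "finite (UNIV - {0::'a})" using finite_subset by blast
  then show False using infinite_UNIV_char_0[where 'a='a] by simp
qed

lemma coeff_principal_minor_poly_mult: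
  fixes F :: "'a::field_char_0 mat"
  assumes F: "F \<in> carrier_mat m r" and H: "H \<in> carrier_mat r m" and rm: "r \<le> m"
  shows "coeff (principal_minor_poly (Pow {0..<m}) (F * H)) (m - r) = det (H * F)"
proof -
  have FH: "F * H \<in> carrier_mat m m" and HF: "H * F \<in> carrier_mat r r" using F H by auto
  have full: "{S\<in>Pow {0..<r}. card S = r} = {{0..<r}}"
    using card_subset_eq[of "{0..<r}"] by auto
  have pad: "principal_pad (H * F) {0..<r} = H * F"
    using HF by (intro eq_matI) (auto simp: principal_pad_def)
  have "principal_minor_poly (Pow {0..<m}) (F * H) = monom 1 (m - r) * principal_minor_poly (Pow {0..<r}) (H * F)"
    by (rule poly_eqI_nonzero) (simp add: poly_monom poly_principal_minor_poly[OF FH]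
        poly_principal_minor_poly[OF HF] sylvester_det_identity[OF F H _ rm])
  then have "coeff (principal_minor_poly (Pow {0..<m}) (F * H)) (m - r) =
      coeff (monom 1 (m - r) * principal_minor_poly (Pow {0..<r}) (H * F)) ((m - r) + 0)" by simp
  also have "\<dots> = coeff (principal_minor_poly (Pow {0..<r}) (H * F)) (r - r)"
    by (simp only: coeff_monom_mult) simp
  also have "\<dots> = det (H * F)"
    unfolding coeff_principal_minor_poly[OF HF order_refl order_refl] full using pad by simp
  finally show ?thesis .
qed

lemma coeff_principal_minor_poly_replace_row_square:
  fixes F H X :: "'a::{idom,ring_char_0} mat"
  defines "C \<equiv> F * H"
  assumes F: "F \<in> carrier_mat m r" and H: "H \<in> carrier_mat r m" and rm: "r \<le> m"
    and X: "X \<in> carrier_mat n m" and i: "i < n" and j: "j < m"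
  shows "coeff (principal_minor_poly {S\<in>Pow {0..<m}. j \<in> S} (replace_row C j (row (X * C * C) i))) (m - r)
      = (X * C) $$ (i,j) * coeff (principal_minor_poly (Pow {0..<m}) C) (m - r)"
proof -
  have C: "C \<in> carrier_mat m m" unfolding C_def using F H by auto
  have XC: "X * C \<in> carrier_mat n m" using X C by auto
  let ?Y = "replace_row C j (row (X * C) i)"
  have "coeff (pCons 0 (principal_minor_poly {S\<in>Pow {0..<m}. j \<in> S} ?Y)) (m - r) = 0"
  proof (cases "m - r")
    case (Suc s)
    then have s: "s = m - Suc r" and sr: "Suc r \<le> m" by auto
    have XF: "X * F \<in> carrier_mat n r" using X F by simp
    have "X * C = X * F * H" unfolding C_def by (rule assoc_mult_mat[OF X F H, symmetric])
    \<comment> \<open>the rows of \<open>?Y\<close> lie in the row space of \<open>H\<close>\<close>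
    then have "?Y = replace_row F j (row (X * F) i) * H"
      unfolding C_def by (simp only: replace_row_mult[OF F H XF i])
    moreover have "replace_row F j (row (X * F) i) \<in> carrier_mat m r" using F X by simp
    ultimately have "det (principal_pad ?Y S) = 0" if "S \<in> {S\<in>Pow {0..<m}. j \<in> S \<and> card S = Suc r}" for S
      using that H by (simp add: det_principal_pad_mult_eq_0)
    moreover have "coeff (principal_minor_poly {S\<in>Pow {0..<m}. j \<in> S} ?Y) s =
        (\<Sum>S\<in>{S\<in>{S\<in>Pow {0..<m}. j \<in> S}. card S = Suc r}. det (principal_pad ?Y S))"
      unfolding s using C by (intro coeff_principal_minor_poly sr) auto
    ultimately show ?thesis using Suc by simp
  qed simp
  then show ?thesis unfolding principal_minor_poly_replace_row_mult[OF C XC i j] by simp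
qed

section \<open>Full rank factorisations\<close>

lemma mult_mat_assoc_dims:
  "dim_col A = dim_row B \<Longrightarrow> dim_col B = dim_row C \<Longrightarrow> A * B * C = A * (B * C)"
  by (rule assoc_mult_mat[of A "dim_row A" "dim_col A" B "dim_col B" C "dim_col C"]) auto

lemma mat_mult_left_cancel:
  fixes F :: "'a::comm_ring_1 mat"
  assumes F: "F \<in> carrier_mat m r" and inj: "\<And>v. v \<in> carrier_vec r \<Longrightarrow> F *\<^sub>v v = 0\<^sub>v m \<Longrightarrow> v = 0\<^sub>v r"
    and X: "X \<in> carrier_mat r c" and X': "X' \<in> carrier_mat r c" and e: "F * X = F * X'"
  shows "X = X'"
proof (rule eq_matI)
  fix a b assume "a < dim_row X'" "b < dim_col X'"
  then have a: "a < r" and b: "b < c" using X' by auto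
  have cX: "col X b \<in> carrier_vec r" "col X' b \<in> carrier_vec r" using X X' b by auto
  have "F *\<^sub>v (col X b - col X' b) = F *\<^sub>v col X b - F *\<^sub>v col X' b"
    by (rule mult_minus_distrib_mat_vec[OF F cX])
  also have "F *\<^sub>v col X b = col (F * X) b" by (rule col_mult2[OF F X b, symmetric])
  also have "F *\<^sub>v col X' b = col (F * X') b" by (rule col_mult2[OF F X' b, symmetric])
  also have "col (F * X) b - col (F * X') b = 0\<^sub>v m" unfolding e using F X' b by (intro eq_vecI) auto
  finally have "col X b - col X' b = 0\<^sub>v r" using inj cX by simp
  then have "(col X b - col X' b) $ a = 0" using a by simp
  then show "X $$ (a,b) = X' $$ (a,b)" using cX a b X X' by simp
qed (use X X' in auto)

lemma exists_column_selection:
  fixes C F :: "'a::comm_ring_1 mat"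
  assumes C: "C \<in> carrier_mat n nc" and F: "F \<in> carrier_mat n r"
    and sel: "\<And>a. a < r \<Longrightarrow> \<exists>j<nc. col F a = col C j"
  shows "\<exists>K\<in>carrier_mat nc r. F = C * K"
proof -
  define idx where "idx a = (SOME j. j < nc \<and> col F a = col C j)" for a
  have idx: "idx a < nc" "col F a = col C (idx a)" if "a < r" for a
    using someI_ex[OF sel[OF that]] unfolding idx_def by auto
  define K :: "'a mat" where "K = mat nc r (\<lambda>(j,a). if j = idx a then 1 else 0)"
  have "F = C * K"
  proof (rule eq_matI)
    fix i a assume "i < dim_row (C * K)" "a < dim_col (C * K)"
    then have i: "i < n" and a: "a < r" using C by (auto simp: K_def)
    have "(C * K) $$ (i,a) = (\<Sum>j = 0..<nc. C $$ (i,j) * K $$ (j,a))"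
      using C i a by (simp add: K_def scalar_prod_def)
    also have "\<dots> = (\<Sum>j = 0..<nc. if j = idx a then C $$ (i,j) else 0)"
      using a by (intro sum.cong) (auto simp: K_def)
    also have "\<dots> = col F a $ i" using C i idx[OF a] by simp
    finally show "F $$ (i,a) = (C * K) $$ (i,a)" using F i a by simp
  qed (use C F in \<open>auto simp: K_def\<close>)
  then show ?thesis by (auto simp: K_def)
qed

lemma exists_inverse_mat:
  fixes N :: "'a::field mat"
  assumes N: "N \<in> carrier_mat r r" and d: "det N \<noteq> 0"
  obtains Ni where "Ni \<in> carrier_mat r r" "N * Ni = 1\<^sub>m r" "Ni * N = 1\<^sub>m r"
  using det_non_zero_imp_unit[OF N d, of undefined] that unfolding Units_def
  by (auto simp: ring_mat_simps)

context vec_space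
begin

lemma exists_factor_of_cols_in_span:
  assumes C: "C \<in> carrier_mat n nc" and F: "F \<in> carrier_mat n r"
    and span: "\<And>j. j < nc \<Longrightarrow> col C j \<in> span (set (cols F))"
  shows "\<exists>H\<in>carrier_mat r nc. C = F * H"
proof -
  have colsF: "set (cols F) \<subseteq> carrier_vec n" using F cols_dim by blast
  have "\<exists>h. h \<in> carrier_vec r \<and> F *\<^sub>v h = col C j" if j: "j < nc" for j
  proof -
    obtain c where "col C j = lincomb_list c (cols F)"
      using span[OF j] span_list_as_span[OF colsF] unfolding span_list_def by auto
    also have "\<dots> = mat_of_cols n (cols F) *\<^sub>v vec r c"
      using lincomb_list_as_mat_mult[where ws="cols F" and c=c] colsF F by (auto simp: subset_iff)
    also have "mat_of_cols n (cols F) = F" using mat_of_cols_cols[of F] F by simp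
    finally show ?thesis by (intro exI[of _ "vec r c"]) auto
  qed
  then obtain h where h: "\<And>j. j < nc \<Longrightarrow> h j \<in> carrier_vec r \<and> F *\<^sub>v h j = col C j" by metis
  define H where "H = mat r nc (\<lambda>(a,j). h j $ a)"
  have "C = F * H"
  proof (rule eq_matI)
    fix i j assume "i < dim_row (F * H)" "j < dim_col (F * H)"
    then have i: "i < n" and j: "j < nc" using F by (auto simp: H_def)
    have "col H j = h j" using h[OF j] j unfolding H_def by (auto intro!: eq_vecI)
    then have "(F * H) $$ (i,j) = (F *\<^sub>v h j) $ i" using F i j by (simp add: H_def)
    then show "C $$ (i,j) = (F * H) $$ (i,j)" using C h[OF j] i j by simp
  qed (use C F in \<open>auto simp: H_def\<close>)
  then show ?thesis by (auto simp: H_def)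
qed

lemma in_span_of_maximal_lin_indpt:
  assumes U: "U \<subseteq> carrier_vec n" and max: "maximal S (\<lambda>T. T \<subseteq> U \<and> lin_indpt T)" and v: "v \<in> U"
  shows "v \<in> span S"
proof (rule ccontr)
  assume ns: "v \<notin> span S"
  have SU: "S \<subseteq> U" and li: "lin_indpt S" using max unfolding maximal_def by auto
  then have S: "S \<subseteq> carrier_vec n" using U by blast
  then have "v \<notin> S" using ns in_own_span by blast
  moreover have "lin_indpt (S \<union> {v})" using lin_dep_iff_in_span[OF S li] ns v U \<open>v \<notin> S\<close> by auto
  ultimately show False using max SU v unfolding maximal_def by blast
qed

lemma rank_factorization:
  assumes C: "C \<in> carrier_mat n nc"
  obtains F H K where "F \<in> carrier_mat n (rank C)" "H \<in> carrier_mat (rank C) nc"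
    "K \<in> carrier_mat nc (rank C)" "C = F * H" "F = C * K" "H * K = 1\<^sub>m (rank C)"
    "\<And>v. v \<in> carrier_vec (rank C) \<Longrightarrow> F *\<^sub>v v = 0\<^sub>v n \<Longrightarrow> v = 0\<^sub>v (rank C)"
proof -
  \<comment> \<open>\<open>F\<close> has as columns a maximal linearly independent set of columns of \<open>C\<close>\<close>
  obtain S where max: "maximal S (\<lambda>T. T \<subseteq> set (cols C) \<and> lin_indpt T)"
    using maximal_exists[of "(\<lambda>T. T \<subseteq> set (cols C) \<and> lin_indpt T)" "card (set (cols C))" "{}"]
    by (meson List.finite_set card_mono empty_iff empty_subsetI finite_lin_indpt2 rev_finite_subset)
  have SC: "S \<subseteq> set (cols C)" and li: "lin_indpt S" using max unfolding maximal_def by auto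
  obtain l where l: "set l = S" "distinct l" using finite_distinct_list[OF finite_subset[OF SC]] by blast
  define r where "r = rank C"
  have len: "length l = r" using l rank_card_indpt[OF C max] r_def distinct_card by fastforce
  have Scar: "S \<subseteq> carrier_vec n" using SC cols_dim C by blast
  define F where "F = mat_of_cols n l"
  have F: "F \<in> carrier_mat n r" unfolding F_def using len by auto
  have cF: "cols F = l" unfolding F_def using cols_mat_of_cols Scar l by auto
  have Finj: "v = 0\<^sub>v r" if "v \<in> carrier_vec r" "F *\<^sub>v v = 0\<^sub>v n" for v
    using lin_depI[OF F that(1) _ that(2)] cF l li by auto
  have "\<exists>j<nc. col F a = col C j" if a: "a < r" for a
  proof -
    have "col F a = l ! a" using cF a F by (metis carrier_matD(2) cols_nth)
    then have "col F a \<in> set (cols C)" using SC l a len by auto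
    then show ?thesis using C by (auto simp: cols_def)
  qed
  then obtain K where K: "K \<in> carrier_mat nc r" and FCK: "F = C * K"
    using exists_column_selection[OF C F] by blast
  have "col C j \<in> set (cols C)" if "j < nc" for j using C that by (simp add: cols_def)
  then have "col C j \<in> span (set (cols F))" if "j < nc" for j
    using in_span_of_maximal_lin_indpt[OF _ max] C cols_dim that cF l by blast
  then obtain H where H: "H \<in> carrier_mat r nc" and CFH: "C = F * H"
    using exists_factor_of_cols_in_span[OF C F] by blast
  have "F * (H * K) = F * H * K" using F H K by (simp add: assoc_mult_mat)
  also have "\<dots> = F" by (simp only: CFH[symmetric] FCK[symmetric])
  also have "\<dots> = F * 1\<^sub>m r" using F by simp
  finally have "F * (H * K) = F * 1\<^sub>m r" .
  then have HK: "H * K = 1\<^sub>m r"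
    using mat_mult_left_cancel[OF F Finj mult_carrier_mat[OF H K] one_carrier_mat] by blast
  from F H K CFH FCK HK Finj show ?thesis unfolding r_def by (rule that)
qed

lemma exists_right_factor_of_rank_mult_eq:
  assumes P: "P \<in> carrier_mat n q" and A: "A \<in> carrier_mat q p" and rk: "rank (P * A) = rank P"
  obtains Y where "Y \<in> carrier_mat p q" "P = P * A * Y"
proof -
  define r where "r = rank P"
  obtain F1 H1 K1 where F1: "F1 \<in> carrier_mat n r" and H1: "H1 \<in> carrier_mat r q"
    and "K1 \<in> carrier_mat q r" and P_eq: "P = F1 * H1" and "F1 = P * K1" and "H1 * K1 = 1\<^sub>m r"
    and "\<And>v. v \<in> carrier_vec r \<Longrightarrow> F1 *\<^sub>v v = 0\<^sub>v n \<Longrightarrow> v = 0\<^sub>v r"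
    by (rule rank_factorization[OF P, folded r_def]) (rule that)
  have PA: "P * A \<in> carrier_mat n p" using P A by simp
  obtain F H K where F: "F \<in> carrier_mat n r" and "H \<in> carrier_mat r p" and K: "K \<in> carrier_mat p r"
    and "P * A = F * H" and F_eq: "F = P * A * K" and "H * K = 1\<^sub>m r"
    and inj: "\<And>v. v \<in> carrier_vec r \<Longrightarrow> F *\<^sub>v v = 0\<^sub>v n \<Longrightarrow> v = 0\<^sub>v r"
    by (rule rank_factorization[OF PA, unfolded rk, folded r_def]) (rule that)
  \<comment> \<open>both column spaces have dimension \<open>r\<close>, so the change of basis \<open>M\<close> is invertible\<close>
  define M where "M = H1 * A * K"
  have M: "M \<in> carrier_mat r r" unfolding M_def using H1 A K by auto
  have D: "dim_row F1 = n" "dim_col F1 = r" "dim_row H1 = r" "dim_col H1 = q" "dim_row A = q"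
    "dim_col A = p" "dim_row K = p" "dim_col K = r" "dim_row M = r" "dim_col M = r"
    using F1 H1 A K M by auto
  have FM: "F = F1 * M" unfolding F_eq P_eq M_def by (simp add: mult_mat_assoc_dims D)
  have "v = 0\<^sub>v r" if v: "v \<in> carrier_vec r" and Mv: "M *\<^sub>v v = 0\<^sub>v r" for v
  proof (rule inj[OF v])
    have "F *\<^sub>v v = F1 *\<^sub>v (M *\<^sub>v v)" unfolding FM using F1 M v by (rule assoc_mult_mat_vec)
    then show "F *\<^sub>v v = 0\<^sub>v n" unfolding Mv using F1 by (auto intro!: eq_vecI simp: scalar_prod_def)
  qed
  then have "det M \<noteq> 0" using det_0_iff_vec_prod_zero[OF M] by blast
  then obtain Mi where Mi: "Mi \<in> carrier_mat r r" "M * Mi = 1\<^sub>m r" by (metis exists_inverse_mat[OF M])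
  have "P * A * (K * Mi * H1) = F * Mi * H1" unfolding F_eq using Mi(1) by (simp add: mult_mat_assoc_dims D)
  also have "\<dots> = F1 * (M * Mi) * H1" unfolding FM using Mi(1) by (simp add: mult_mat_assoc_dims D)
  also have "\<dots> = P" unfolding Mi(2) P_eq using F1 by simp
  finally have "P = P * A * (K * Mi * H1)" by (rule sym)
  with mult_carrier_mat[OF mult_carrier_mat[OF K Mi(1)] H1] show ?thesis by (rule that)
qed

end

lemma det_mult_swap_neq_0:
  fixes F H :: "'a::comm_ring_1 mat"
  assumes F: "F \<in> carrier_mat m r" and H: "H \<in> carrier_mat r m" and K: "K \<in> carrier_mat m r"
    and W: "W \<in> carrier_mat m m" and HK: "H * K = 1\<^sub>m r"
    and inj: "\<And>v. v \<in> carrier_vec r \<Longrightarrow> F *\<^sub>v v = 0\<^sub>v m \<Longrightarrow> v = 0\<^sub>v r"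
    and idem: "F * H = F * H * (F * H) * W"
  shows "det (H * F) \<noteq> 0"
proof
  assume d: "det (H * F) = 0"
  have D: "dim_row F = m" "dim_col F = r" "dim_row H = r" "dim_col H = m" "dim_row K = m" "dim_col K = r"
    "dim_row W = m" "dim_col W = m" using F H K W by auto
  have "F * (H * F * H * W) = F * H * (F * H) * W" by (simp add: mult_mat_assoc_dims D)
  then have "F * H = F * (H * F * H * W)" by (simp only: idem[symmetric])
  then have H_eq: "H = H * F * H * W"
    using mat_mult_left_cancel[OF F inj H] F H W by (metis mult_carrier_mat)
  have "H * F * (H * W * K) = H * F * H * W * K" by (simp add: mult_mat_assoc_dims D)
  also have "\<dots> = 1\<^sub>m r" by (simp only: H_eq[symmetric] HK)
  finally have "det (H * F) * det (H * W * K) = 1"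
    using F H W K det_mult[of "H * F" r "H * W * K"] by simp
  then show False using d by simp
qed

lemma group_inverse_of_full_rank_factorization:
  fixes F H :: "'a::field mat"
  assumes F: "F \<in> carrier_mat m r" and H: "H \<in> carrier_mat r m" and d: "det (H * F) \<noteq> 0"
  obtains G where "G \<in> carrier_mat m m" "F * H * G = G * (F * H)"
    "G * (F * H) * G = G" "F * H * G * (F * H) = F * H"
proof -
  obtain Nv where Nv: "Nv \<in> carrier_mat r r" "H * F * Nv = 1\<^sub>m r" "Nv * (H * F) = 1\<^sub>m r"
    using exists_inverse_mat[OF mult_carrier_mat[OF H F] d] by blast
  have D: "dim_row F = m" "dim_col F = r" "dim_row H = r" "dim_col H = m" "dim_row Nv = r" "dim_col Nv = r"
    using F H Nv(1) by auto
  have cancel: "H * (F * (Nv * Z)) = Z" "Nv * (H * (F * Z)) = Z" if Z: "dim_row Z = r" for Z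
  proof -
    have "H * (F * (Nv * Z)) = H * F * Nv * Z" "Nv * (H * (F * Z)) = Nv * (H * F) * Z"
      by (simp_all add: mult_mat_assoc_dims D Z)
    then show "H * (F * (Nv * Z)) = Z" "Nv * (H * (F * Z)) = Z"
      using Nv Z by (simp_all add: left_mult_one_mat')
  qed
  define G where "G = F * Nv * Nv * H"
  have "F * H * G = F * Nv * H" "G * (F * H) = F * Nv * H"
    unfolding G_def by (simp_all add: mult_mat_assoc_dims D cancel)
  then have "F * H * G = G * (F * H)" by simp
  moreover have "G * (F * H) * G = G" "F * H * G * (F * H) = F * H"
    unfolding G_def by (simp_all add: mult_mat_assoc_dims D cancel)
  moreover have "G \<in> carrier_mat m m"
    unfolding G_def by (rule mult_carrier_mat[OF mult_carrier_mat[OF mult_carrier_mat[OF F Nv(1)] Nv(1)] H])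
  ultimately show ?thesis using that by blast
qed

section \<open>Drazin inverses\<close>

context monoid
begin

lemma nat_pow_commute:
  assumes x: "x \<in> carrier G" and y: "y \<in> carrier G" and xy: "x \<otimes> y = y \<otimes> x"
  shows "x [^] (n::nat) \<otimes> y = y \<otimes> x [^] n"
proof (induction n)
  case (Suc n)
  have "x [^] Suc n \<otimes> y = x [^] n \<otimes> (y \<otimes> x)" using x y xy by (simp add: m_assoc)
  also have "\<dots> = y \<otimes> x [^] Suc n" using x y Suc by (simp flip: m_assoc)
  finally show ?case .
qed (use y in simp)

lemma nat_pow_mult_distrib_commute:
  assumes x: "x \<in> carrier G" and y: "y \<in> carrier G" and xy: "x \<otimes> y = y \<otimes> x"
  shows "(x \<otimes> y) [^] (n::nat) = x [^] n \<otimes> y [^] n"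
proof (induction n)
  case (Suc n)
  have "(x \<otimes> y) [^] Suc n = x [^] n \<otimes> (y [^] n \<otimes> x) \<otimes> y" using x y Suc by (simp add: m_assoc)
  also have "\<dots> = x [^] Suc n \<otimes> y [^] Suc n"
    using x y nat_pow_commute[OF y x xy[symmetric]] by (simp add: m_assoc)
  finally show ?case .
qed simp

lemma idempotent_nat_pow_Suc:
  assumes e: "e \<in> carrier G" and ee: "e \<otimes> e = e"
  shows "e [^] Suc n = e"
  by (induction n) (use e ee in simp_all)

lemma nat_pow_Suc_absorb:
  assumes a: "a \<in> carrier G" and y: "y \<in> carrier G" and k: "a [^] k = a [^] Suc k \<otimes> y"
  shows "a [^] Suc k = a [^] Suc k \<otimes> a [^] Suc k \<otimes> y [^] Suc k"
proof -
  have chain: "a [^] k = a [^] (k + j) \<otimes> y [^] j" for j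
  proof (induction j)
    case (Suc j)
    have "a [^] (k + j) = a [^] j \<otimes> (a [^] Suc k \<otimes> y)"
      using a by (simp only: k[symmetric] nat_pow_mult add.commute)
    also have "\<dots> = (a [^] j \<otimes> a [^] Suc k) \<otimes> y"
      using a y by (simp only: m_assoc nat_pow_closed)
    also have "a [^] j \<otimes> a [^] Suc k = a [^] (k + Suc j)"
      using a by (simp only: nat_pow_mult add.commute add_Suc_right)
    finally show ?case
      using Suc a y by (simp only: m_assoc nat_pow_closed nat_pow_Suc2)
  qed (use a in simp)
  have "a [^] Suc k = a \<otimes> (a [^] (k + Suc k) \<otimes> y [^] Suc k)"
    using chain[of "Suc k"] a by (simp only: nat_pow_Suc2)
  also have "\<dots> = a [^] Suc k \<otimes> a [^] Suc k \<otimes> y [^] Suc k"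
    using a y by (simp only: nat_pow_mult m_assoc[symmetric] nat_pow_closed nat_pow_Suc2[symmetric] add_Suc)
  finally show ?thesis .
qed

lemma mult_eq_nat_pow_mult_of_outer_inverse:
  assumes a: "a \<in> carrier G" and u: "u \<in> carrier G" and u2: "u \<otimes> a \<otimes> u = u" and u3: "a \<otimes> u = u \<otimes> a"
  shows "a \<otimes> u = a [^] Suc k \<otimes> u [^] Suc k" "a \<otimes> u = u [^] Suc k \<otimes> a [^] Suc k"
proof -
  have "(a \<otimes> u) \<otimes> (a \<otimes> u) = a \<otimes> (u \<otimes> a \<otimes> u)" using a u by (simp add: m_assoc)
  then have "(a \<otimes> u) \<otimes> (a \<otimes> u) = a \<otimes> u" by (simp only: u2)
  then have idem: "a \<otimes> u = (a \<otimes> u) [^] Suc k" using a u by (simp only: idempotent_nat_pow_Suc m_closed)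
  show "a \<otimes> u = a [^] Suc k \<otimes> u [^] Suc k"
    using idem nat_pow_mult_distrib_commute[OF a u u3] by (rule trans)
  show "a \<otimes> u = u [^] Suc k \<otimes> a [^] Suc k"
    using idem nat_pow_mult_distrib_commute[OF u a u3[symmetric]] by (simp only: u3)
qed

lemma nat_pow_Suc_mult_absorb:
  assumes a: "a \<in> carrier G" and v: "v \<in> carrier G"
    and v1: "a [^] Suc k \<otimes> v = a [^] k" and v3: "a \<otimes> v = v \<otimes> a"
  shows "a [^] Suc k \<otimes> (a \<otimes> v) = a [^] Suc k" "(a \<otimes> v) \<otimes> a [^] Suc k = a [^] Suc k"
proof -
  have "a [^] Suc k \<otimes> (a \<otimes> v) = a \<otimes> (a [^] Suc k \<otimes> v)"
    using a v nat_pow_commute[OF a a refl, of "Suc k"] by (metis m_assoc nat_pow_closed)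
  then show left: "a [^] Suc k \<otimes> (a \<otimes> v) = a [^] Suc k"
    using a by (simp only: v1 nat_pow_Suc2[symmetric])
  have "a \<otimes> (a \<otimes> v) = (a \<otimes> v) \<otimes> a" using a v v3 by (metis m_assoc)
  then have "a [^] Suc k \<otimes> (a \<otimes> v) = (a \<otimes> v) \<otimes> a [^] Suc k"
    using a v by (intro nat_pow_commute) auto
  then show "(a \<otimes> v) \<otimes> a [^] Suc k = a [^] Suc k" using left by simp
qed

lemma drazin_inverse_unique:
  assumes a: "a \<in> carrier G" and x: "x \<in> carrier G" and y: "y \<in> carrier G"
    and x1: "a [^] Suc k \<otimes> x = a [^] k" and x2: "x \<otimes> a \<otimes> x = x" and x3: "a \<otimes> x = x \<otimes> a"
    and y1: "a [^] Suc k \<otimes> y = a [^] k" and y2: "y \<otimes> a \<otimes> y = y" and y3: "a \<otimes> y = y \<otimes> a"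
  shows "x = y"
proof -
  note x_pow = mult_eq_nat_pow_mult_of_outer_inverse[OF a x x2 x3, of k]
  note y_pow = mult_eq_nat_pow_mult_of_outer_inverse[OF a y y2 y3, of k]
  have "a \<otimes> x = x [^] Suc k \<otimes> (a [^] Suc k \<otimes> (a \<otimes> y))"
    using x_pow(2) nat_pow_Suc_mult_absorb(1)[OF a y y1 y3] by simp
  also have "\<dots> = (a \<otimes> x) \<otimes> (a \<otimes> y)"
    using x_pow(2) a x y by (simp only: m_assoc[symmetric] nat_pow_closed m_closed)
  finally have ax: "a \<otimes> x = (a \<otimes> x) \<otimes> (a \<otimes> y)" .
  have "a \<otimes> y = (a \<otimes> x \<otimes> a [^] Suc k) \<otimes> y [^] Suc k"
    using y_pow(1) nat_pow_Suc_mult_absorb(2)[OF a x x1 x3] by simp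
  also have "\<dots> = (a \<otimes> x) \<otimes> (a \<otimes> y)"
    using y_pow(1) a x y by (simp only: m_assoc nat_pow_closed m_closed)
  finally have axy: "a \<otimes> x = a \<otimes> y" using ax by simp
  have "x = x \<otimes> (a \<otimes> y)" using a x x2 by (simp add: m_assoc flip: axy)
  also have "\<dots> = (a \<otimes> x) \<otimes> y" using a x y x3 by (simp add: m_assoc)
  also have "\<dots> = y \<otimes> a \<otimes> y" by (simp only: axy y3)
  finally show ?thesis using y2 by simp
qed

lemma group_inverse_commute:
  assumes a: "a \<in> carrier G" and c: "c \<in> carrier G" and g: "g \<in> carrier G"
    and cg: "c \<otimes> g = g \<otimes> c" and gcg: "g \<otimes> c \<otimes> g = g" and cgc: "c \<otimes> g \<otimes> c = c"
    and ac: "a \<otimes> c = c \<otimes> a"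
  shows "a \<otimes> g = g \<otimes> a"
proof -
  have ac': "a \<otimes> (c \<otimes> z) = c \<otimes> (a \<otimes> z)" and ca': "c \<otimes> (a \<otimes> z) = a \<otimes> (c \<otimes> z)"
    and cgc': "c \<otimes> (g \<otimes> (c \<otimes> z)) = c \<otimes> z" if z: "z \<in> carrier G" for z
    using a c g z by (simp_all add: ac cgc flip: m_assoc)
  have cgc_r: "c \<otimes> (g \<otimes> c) = c" using c g cgc by (simp add: m_assoc)
  define e where "e = c \<otimes> g"
  have e_gc: "e = g \<otimes> c" unfolding e_def by (rule cg)
  have e: "e \<in> carrier G" unfolding e_def using c g by simp
  have "e \<otimes> a \<otimes> e = a \<otimes> e" unfolding e_def using a c g by (simp add: m_assoc ac' cgc')
  moreover have "e \<otimes> a \<otimes> e = e \<otimes> a" unfolding e_gc using a c g by (simp add: m_assoc ca' cgc_r flip: ac)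
  ultimately have ae: "a \<otimes> e = e \<otimes> a" by simp
  have "a \<otimes> g = a \<otimes> (e \<otimes> g)" unfolding e_gc using c g gcg by (simp add: m_assoc)
  also have "\<dots> = e \<otimes> a \<otimes> g" using a e g by (simp add: ae flip: m_assoc)
  also have "\<dots> = g \<otimes> (c \<otimes> (a \<otimes> g))" unfolding e_gc using a c g by (simp add: m_assoc)
  also have "\<dots> = g \<otimes> (a \<otimes> e)" unfolding e_def using a c g by (simp add: ac')
  also have "\<dots> = g \<otimes> e \<otimes> a" using a e g by (simp add: ae m_assoc)
  also have "g \<otimes> e = g" unfolding e_def using c g gcg by (simp add: m_assoc)
  finally show ?thesis .
qed

lemma drazin_inverse_of_group_inverse:
  fixes a g y and k :: nat
  defines c_def: "c \<equiv> a [^] Suc k" and d_def: "d \<equiv> g \<otimes> a [^] k"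
  assumes a: "a \<in> carrier G" and g: "g \<in> carrier G" and y: "y \<in> carrier G"
    and cg: "c \<otimes> g = g \<otimes> c" and gcg: "g \<otimes> c \<otimes> g = g" and cgc: "c \<otimes> g \<otimes> c = c"
    and ky: "a [^] k = c \<otimes> y"
  shows "c \<otimes> d = a [^] k" and "d \<otimes> a \<otimes> d = d" and "a \<otimes> d = d \<otimes> a"
    and "d = (g \<otimes> g \<otimes> a [^] k) \<otimes> c" and "a [^] k = (g \<otimes> g \<otimes> a [^] k) \<otimes> c \<otimes> c"
proof -
  have c: "c \<in> carrier G" unfolding c_def using a by simp
  have ac: "a \<otimes> c = c \<otimes> a" unfolding c_def by (rule nat_pow_commute[OF a a refl, symmetric])
  have akc: "a [^] k \<otimes> c = c \<otimes> a [^] k" unfolding c_def by (rule nat_pow_comm[OF a])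
  have akac: "a [^] k \<otimes> a = c" unfolding c_def by simp
  have aak: "a \<otimes> a [^] k = a [^] k \<otimes> a" by (rule nat_pow_commute[OF a a refl, symmetric])
  have ag: "a \<otimes> g = g \<otimes> a" by (rule group_inverse_commute[OF a c g cg gcg cgc ac])
  have ggc: "g \<otimes> g \<otimes> c = g"
  proof -
    have "g \<otimes> g \<otimes> c = g \<otimes> (g \<otimes> c)" using g c by (simp add: m_assoc)
    also have "\<dots> = g \<otimes> (c \<otimes> g)" by (simp only: cg)
    also have "\<dots> = g \<otimes> c \<otimes> g" using g c by (simp add: m_assoc)
    finally show ?thesis using gcg by simp
  qed
  have gcc: "g \<otimes> c \<otimes> c = c" using cg cgc by simp
  show "c \<otimes> d = a [^] k" unfolding d_def ky using c g y cgc by (simp flip: m_assoc)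
  have "d \<otimes> a \<otimes> d = g \<otimes> (a [^] k \<otimes> a) \<otimes> g \<otimes> a [^] k" unfolding d_def using a g by (simp add: m_assoc)
  also have "\<dots> = d" unfolding akac d_def gcg ..
  finally show "d \<otimes> a \<otimes> d = d" .
  have "a \<otimes> d = g \<otimes> (a \<otimes> a [^] k)" unfolding d_def using a g by (simp add: ag flip: m_assoc)
  also have "\<dots> = d \<otimes> a" unfolding aak d_def using a g by (simp add: m_assoc)
  finally show "a \<otimes> d = d \<otimes> a" .
  have "(g \<otimes> g \<otimes> a [^] k) \<otimes> c = g \<otimes> g \<otimes> c \<otimes> a [^] k" using a c g by (simp add: akc m_assoc)
  also have "\<dots> = d" unfolding ggc d_def ..
  finally show dc: "d = (g \<otimes> g \<otimes> a [^] k) \<otimes> c" ..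
  have "(g \<otimes> g \<otimes> a [^] k) \<otimes> c \<otimes> c = d \<otimes> c" by (simp only: dc)
  also have "\<dots> = g \<otimes> c \<otimes> a [^] k" unfolding d_def using a c g by (simp add: akc m_assoc)
  also have "\<dots> = g \<otimes> c \<otimes> c \<otimes> y" unfolding ky using c g y by (simp add: m_assoc)
  finally show "a [^] k = (g \<otimes> g \<otimes> a [^] k) \<otimes> c \<otimes> c" unfolding gcc ky by (rule sym)
qed

end

lemma drazin_eqI:
  fixes A X :: "complex mat"
  assumes A: "A \<in> carrier_mat m m" and X: "is_drazin_inverse A X"
  shows "drazin A = X"
  unfolding drazin_def
proof (rule the_equality[where P = "is_drazin_inverse A", OF X])
  \<comment> \<open>in this monoid of square matrices, \<open>[^]\<close> is \<open>^\<^sub>m\<close> by \<open>pow_mat_ring_pow\<close>\<close>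
  interpret R: semiring "ring_mat TYPE(complex) m undefined" by (rule semiring_mat)
  fix Y assume Y: "is_drazin_inverse A Y"
  show "Y = X"
    using A X Y R.drazin_inverse_unique[of A Y X "mat_ind A"] unfolding is_drazin_inverse_def
    by (simp add: ring_mat_simps pow_mat_ring_pow[OF A, symmetric])
qed

lemma drazin_of_group_inverse:
  fixes A G Y :: "complex mat"
  assumes A: "A \<in> carrier_mat m m" and G: "G \<in> carrier_mat m m" and Y: "Y \<in> carrier_mat m m"
    and CG: "A ^\<^sub>m (k+1) * G = G * A ^\<^sub>m (k+1)" and GCG: "G * A ^\<^sub>m (k+1) * G = G"
    and CGC: "A ^\<^sub>m (k+1) * G * A ^\<^sub>m (k+1) = A ^\<^sub>m (k+1)"
    and ky: "A ^\<^sub>m k = A ^\<^sub>m (k+1) * Y" and k: "mat_ind A = k"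
  shows "drazin A = G * G * A ^\<^sub>m k * A ^\<^sub>m (k+1)"
    and "A ^\<^sub>m k = G * G * A ^\<^sub>m k * A ^\<^sub>m (k+1) * A ^\<^sub>m (k+1)"
proof -
  interpret R: semiring "ring_mat TYPE(complex) m undefined" by (rule semiring_mat)
  note D = R.drazin_inverse_of_group_inverse[of A G Y k,
      unfolded ring_mat_simps pow_mat_ring_pow[OF A, symmetric] Suc_eq_plus1, OF A G Y CG GCG CGC ky]
  have "is_drazin_inverse A (G * A ^\<^sub>m k)"
    unfolding is_drazin_inverse_def k using A G D(1-3) by simp
  then have "drazin A = G * A ^\<^sub>m k" by (rule drazin_eqI[OF A])
  with D(4) show "drazin A = G * G * A ^\<^sub>m k * A ^\<^sub>m (k+1)" by simp
  show "A ^\<^sub>m k = G * G * A ^\<^sub>m k * A ^\<^sub>m (k+1) * A ^\<^sub>m (k+1)" by (rule D(5))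
qed

lemma drazin_rank_factorization:
  fixes A :: "complex mat"
  assumes A: "A \<in> carrier_mat m m" and k: "mat_ind A = k"
    and rk1: "crank (A ^\<^sub>m (k+1)) = r" and rk2: "crank (A ^\<^sub>m k) = r"
  obtains F H W where "F \<in> carrier_mat m r" "H \<in> carrier_mat r m" "W \<in> carrier_mat m m"
    "A ^\<^sub>m (k+1) = F * H" "det (H * F) \<noteq> 0"
    "drazin A = W * A ^\<^sub>m (k+1)" "A ^\<^sub>m k = W * A ^\<^sub>m (k+1) * A ^\<^sub>m (k+1)"
proof -
  interpret vec_space "TYPE(complex)" m .
  interpret R: semiring "ring_mat TYPE(complex) m undefined" by (rule semiring_mat)
  define C where "C = A ^\<^sub>m (k+1)"
  have C: "C \<in> carrier_mat m m" and P: "A ^\<^sub>m k \<in> carrier_mat m m" unfolding C_def using A by auto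
  have "rank (A ^\<^sub>m k * A) = rank (A ^\<^sub>m k)" using rk1 rk2 A by (simp add: crank_def)
  then obtain Y where Y: "Y \<in> carrier_mat m m" and "A ^\<^sub>m k = A ^\<^sub>m k * A * Y"
    by (rule exists_right_factor_of_rank_mult_eq[OF P A])
  then have ky: "A ^\<^sub>m k = C * Y" unfolding C_def by simp
  \<comment> \<open>hence \<open>rank C\<^sup>2 = rank C\<close>, which makes \<open>H F\<close> invertible for any full rank factorization \<open>C = F H\<close>\<close>
  have idem: "C = C * C * Y ^\<^sub>m (k+1)"
    using R.nat_pow_Suc_absorb[of A Y k, unfolded ring_mat_simps pow_mat_ring_pow[OF A, symmetric]
        pow_mat_ring_pow[OF Y, symmetric] Suc_eq_plus1, folded C_def, OF A Y ky] .
  have rC: "rank C = r" using rk1 A unfolding C_def by (simp add: crank_def)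
  obtain F H K where F: "F \<in> carrier_mat m r" and H: "H \<in> carrier_mat r m" and K: "K \<in> carrier_mat m r"
    and CFH: "C = F * H" and "F = C * K" and HK: "H * K = 1\<^sub>m r"
    and inj: "\<And>v. v \<in> carrier_vec r \<Longrightarrow> F *\<^sub>v v = 0\<^sub>v m \<Longrightarrow> v = 0\<^sub>v r"
    by (rule rank_factorization[OF C, unfolded rC]) (rule that)
  have dHF: "det (H * F) \<noteq> 0"
    by (rule det_mult_swap_neq_0[OF F H K pow_carrier_mat[OF Y] HK inj idem[unfolded CFH]])
  obtain G where G: "G \<in> carrier_mat m m" and "C * G = G * C" "G * C * G = G" "C * G * C = C"
    by (rule group_inverse_of_full_rank_factorization[OF F H dHF, folded CFH]) (rule that)
  note dr = drazin_of_group_inverse[OF A G Y, of k, folded C_def, OF this(2-4) ky k]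
  have "G * G * A ^\<^sub>m k \<in> carrier_mat m m" using G P by simp
  from F H this CFH[unfolded C_def] dHF dr[folded C_def] show ?thesis unfolding C_def by (rule that)
qed

theorem theorem4p7:
  fixes A B :: "complex mat" and m n k r :: nat
  assumes A: "A \<in> carrier_mat m m"
    and B: "B \<in> carrier_mat n m"
    and ind: "mat_ind A = k"
    and rk1: "crank (A ^\<^sub>m (k+1)) = r"
    and rk2: "crank (A ^\<^sub>m k) = r"
    and "r \<le> m"
  shows "\<forall>i<n. \<forall>j<m.
     (B * drazin A) $$ (i, j) =
       (\<Sum>\<alpha>\<in>{\<alpha>\<in>Irm r m. j \<in> \<alpha>}.
          det (principal_submatrix (replace_row (A ^\<^sub>m (k+1)) j (row (B * A ^\<^sub>m k) i)) \<alpha>))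
       / (\<Sum>\<alpha>\<in>Irm r m. det (principal_submatrix (A ^\<^sub>m (k+1)) \<alpha>))"
proof (intro allI impI)
  fix i j assume i: "i < n" and j: "j < m"
  note rm = \<open>r \<le> m\<close>
  obtain F H W where F: "F \<in> carrier_mat m r" and H: "H \<in> carrier_mat r m" and W: "W \<in> carrier_mat m m"
    and CFH: "A ^\<^sub>m (k+1) = F * H" and dHF: "det (H * F) \<noteq> 0"
    and dr: "drazin A = W * A ^\<^sub>m (k+1)" and Pk: "A ^\<^sub>m k = W * A ^\<^sub>m (k+1) * A ^\<^sub>m (k+1)"
    by (rule drazin_rank_factorization[OF A ind rk1 rk2])
  have C: "F * H \<in> carrier_mat m m" and BW: "B * W \<in> carrier_mat n m" using F H B W by auto
  have BPk: "B * A ^\<^sub>m k = B * W * (F * H) * (F * H)"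
    unfolding Pk CFH using B W F H by (simp add: mult_mat_assoc_dims)
  have BD: "B * drazin A = B * W * (F * H)"
    unfolding dr CFH using B W F H by (simp add: mult_mat_assoc_dims)
  have num: "(\<Sum>\<alpha>\<in>{\<alpha>\<in>Irm r m. j \<in> \<alpha>}.
      det (principal_submatrix (replace_row (A ^\<^sub>m (k+1)) j (row (B * A ^\<^sub>m k) i)) \<alpha>))
      = (B * drazin A) $$ (i,j) * det (H * F)"
    unfolding CFH BPk BD sum_principal_minors_eq_coeff[OF replace_row_carrier[OF C] rm]
      coeff_principal_minor_poly_replace_row_square[OF F H rm BW i j]
      coeff_principal_minor_poly_mult[OF F H rm] ..
  have den: "(\<Sum>\<alpha>\<in>Irm r m. det (principal_submatrix (A ^\<^sub>m (k+1)) \<alpha>)) = det (H * F)"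
    using sum_principal_minors_eq_coeff[OF C rm, of "\<lambda>_. True"] coeff_principal_minor_poly_mult[OF F H rm]
    unfolding CFH by (simp add: Pow_def)
  show "(B * drazin A) $$ (i, j) =
       (\<Sum>\<alpha>\<in>{\<alpha>\<in>Irm r m. j \<in> \<alpha>}.
          det (principal_submatrix (replace_row (A ^\<^sub>m (k+1)) j (row (B * A ^\<^sub>m k) i)) \<alpha>))
       / (\<Sum>\<alpha>\<in>Irm r m. det (principal_submatrix (A ^\<^sub>m (k+1)) \<alpha>))"
    unfolding num den using dHF by simp
qed

end
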